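(* Let $\theta\in\mathbb R$ and $\epsilon>0$. If $U$ is a Clifford+$T$ operator and $\lambda$ a unit scalar with $\|R_z(\theta)-\lambda U\|\le\epsilon$, then there exist $\lambda'\in\{1,e^{i\pi/8}\}$ and a Clifford+$T$ operator $U'$ with the same $T$-count as $U$ such that $\|R_z(\theta)-\lambda'U'\|\le\epsilon$. Thus, in the approximate synthesis problem for $z$-rotations up to a phase, it suffices to consider only the scalars $\lambda=1$ and $\lambda=e^{i\pi/8}$.
   Context: Let $\omega=e^{i\pi/4}$, $H=\frac{1}{\sqrt2}\begin{bmatrix}1&1\\1&-1\end{bmatrix}$, $S=\begin{bmatrix}1&0\\0&i\end{bmatrix}$, $T=\begin{bmatrix}1&0\\0&\omega\end{bmatrix}$. A Clifford+$T$ operator is an element of the group generated by $\omega I,H,S,T$; its $T$-count is the minimal number of occurrences of $T$ or $T^{-1}$ in a word in these generators and their inverses representing it. $R_z(\theta)=\begin{bmatrix}e^{-i\theta/2}&0\\0&e^{i\theta/2}\end{bmatrix}$. The approximate synthesis problem for $z$-rotations up to a phase asks, given $\theta$ and $\epsilon$, for a Clifford+$T$ operator $U$ (of smallest possible $T$-count) and a unit scalar $\lambda$ with $\|R_z(\theta)-\lambda U\|\le\epsilon$, where $\|\cdot\|$ is the operator norm. *)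

theory Defs
  imports "HOL-Analysis.Analysis"
begin

type_synonym cmat2 = "complex ^ 2 ^ 2"

definition mat2 :: "complex \<Rightarrow> complex \<Rightarrow> complex \<Rightarrow> complex \<Rightarrow> cmat2" where
  "mat2 a b c d = (\<chi> i j. if i = 1 then (if j = 1 then a else b) else (if j = 1 then c else d))"

definition smult_mat :: "complex \<Rightarrow> cmat2 \<Rightarrow> cmat2" where
  "smult_mat c A = (\<chi> i j. c * A $ i $ j)"

definition op_norm :: "cmat2 \<Rightarrow> real" where
  "op_norm A = onorm (\<lambda>x :: complex ^ 2. A *v x)"

definition omega :: complex where "omega = exp (\<i> * of_real pi / 4)"

definition Hmat :: cmat2 where "Hmat = smult_mat (1 / of_real (sqrt 2)) (mat2 1 1 1 (-1))"
definition Smat :: cmat2 where "Smat = mat2 1 0 0 \<i>"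
definition Tmat :: cmat2 where "Tmat = mat2 1 0 0 omega"

definition Rz :: "real \<Rightarrow> cmat2" where
  "Rz theta = mat2 (exp (- \<i> * of_real theta / 2)) 0 0 (exp (\<i> * of_real theta / 2))"

datatype gen = GW | GH | GS | GT | GWi | GHi | GSi | GTi

fun gen_mat :: "gen \<Rightarrow> cmat2" where
  "gen_mat GW = smult_mat omega (mat 1)"
| "gen_mat GH = Hmat"
| "gen_mat GS = Smat"
| "gen_mat GT = Tmat"
| "gen_mat GWi = matrix_inv (smult_mat omega (mat 1))"
| "gen_mat GHi = matrix_inv Hmat"
| "gen_mat GSi = matrix_inv Smat"
| "gen_mat GTi = matrix_inv Tmat"

definition word_mat :: "gen list \<Rightarrow> cmat2" where
  "word_mat ws = foldr (\<lambda>g M. gen_mat g ** M) ws (mat 1)"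

definition clifford_T :: "cmat2 \<Rightarrow> bool" where
  "clifford_T U \<longleftrightarrow> (\<exists>ws. word_mat ws = U)"

definition tcount_word :: "gen list \<Rightarrow> nat" where
  "tcount_word ws = length (filter (\<lambda>g. g = GT \<or> g = GTi) ws)"

definition tcount :: "cmat2 \<Rightarrow> nat" where
  "tcount U = (LEAST n. \<exists>ws. word_mat ws = U \<and> tcount_word ws = n)"

end

theory Submission
  imports Defs
begin

text \<open>With \<open>\<zeta> = e^{i\<pi>/8}\<close>, every generator, hence every Clifford+T operator, is
  \<open>\<zeta>^k Y\<close> with \<open>Y \<in> SU(2)\<close>, and \<open>R\<^sub>z(\<theta>) \<in> SU(2)\<close>. So it suffices to show: for \<open>A, Y \<in> SU(2)\<close>
  and a unit scalar \<open>\<mu>\<close>, some real sign \<open>s = \<plusminus>1\<close> satisfies \<open>\<parallel>A - sY\<parallel> \<le> \<parallel>A - \<mu>Y\<parallel>\<close>.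
  Multiplying by \<open>A\<^sup>*\<close> reduces this to \<open>A = I\<close>, \<open>Y = [p, -q\<^sup>*; q, p\<^sup>*]\<close>. The two basis vectors give
  \<open>\<parallel>I - \<mu>Y\<parallel>\<^sup>2 \<ge> 2 - 2 Re(\<mu>p)\<close> and \<open>\<ge> 2 - 2 Re(\<mu>p\<^sup>*)\<close>, whose average is at least \<open>2 - 2|Re p|\<close>;
  on the other hand \<open>I - sY\<close> is \<open>\<sqrt>(2 - 2s Re p)\<close> times an isometry, so the sign of \<open>Re p\<close> wins.
  Finally \<open>s = \<zeta>^j\<close>, and of the phase \<open>\<zeta>^i\<close> in front of the operator everything but
  \<open>\<zeta>^(i mod 2)\<close> is a power of \<open>\<omega>\<close>, which is absorbed into the operator at no cost in T-count.\<close>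

definition zeta :: complex where "zeta = exp (\<i> * of_real pi / 8)"

lemma zeta_power_2: "zeta ^ 2 = omega"
  unfolding zeta_def omega_def by (simp add: exp_of_nat_mult[symmetric] algebra_simps)

lemma zeta_power_4: "zeta ^ 4 = \<i>"
proof -
  have "zeta ^ 4 = cis (pi / 2)"
    unfolding zeta_def cis_conv_exp by (simp add: exp_of_nat_mult[symmetric] algebra_simps)
  thus ?thesis by simp
qed

lemma zeta_power_8: "zeta ^ 8 = -1"
  using power_mult[of zeta 4 2] by (simp add: zeta_power_4)

lemma zeta_power_16: "zeta ^ 16 = 1"
  using power_mult[of zeta 8 2] by (simp add: zeta_power_8)

lemma zeta_power_mult_cnj: "zeta ^ k * cnj (zeta ^ k) = 1"
  unfolding zeta_def by (simp add: exp_cnj flip: exp_add power_mult_distrib)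

lemma omega_power_8: "omega ^ 8 = 1"
  using power_mult[of zeta 2 8] by (simp add: zeta_power_2 zeta_power_16)

lemma zeta_power_mod_2: "zeta ^ (i mod 2) \<in> {1, exp (\<i> * of_real pi / 8)}"
  unfolding zeta_def by (cases "even i") (auto simp: odd_iff_mod_2_eq_one)

lemma zeta_power_split: "zeta ^ i = zeta ^ (i mod 2) * omega ^ (i div 2)"
  by (metis mod_div_mult_eq power_add power_mult zeta_power_2 add.commute mult.commute)

lemma real_sign_eq_zeta_power:
  assumes "s \<in> {-1, 1 :: real}"
  obtains i where "complex_of_real s = zeta ^ (i + k)"
proof -
  have z16k: "zeta ^ (16 * k) = 1" by (simp add: power_mult zeta_power_16)
  show ?thesis
  proof (cases "s = 1")
    case True
    thus ?thesis using that[of "15 * k"] z16k by simp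
  next
    case False
    hence "s = -1" using assms by simp
    thus ?thesis using that[of "15 * k + 8"] z16k by (simp add: power_add zeta_power_8 algebra_simps)
  qed
qed

text \<open>Cayley--Klein form; it lies in \<open>SU(2)\<close> exactly when \<open>|p|\<^sup>2 + |q|\<^sup>2 = 1\<close>.\<close>

definition su2 :: "complex \<Rightarrow> complex \<Rightarrow> cmat2" where
  "su2 p q = mat2 p (- cnj q) q (cnj p)"

lemma su2_mult: "su2 p q ** su2 p' q' = su2 (p * p' - cnj q * q') (q * p' + cnj p * q')"
  by (simp add: su2_def mat2_def matrix_matrix_mult_def vec_eq_iff forall_2 sum_2 algebra_simps)

lemma su2_unit_mult:
  assumes "p * cnj p + q * cnj q = 1" and "p' * cnj p' + q' * cnj q' = 1"
  shows "(p * p' - cnj q * q') * cnj (p * p' - cnj q * q')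
           + (q * p' + cnj p * q') * cnj (q * p' + cnj p * q') = 1"
proof -
  have "(p * p' - cnj q * q') * cnj (p * p' - cnj q * q') + (q * p' + cnj p * q') * cnj (q * p' + cnj p * q')
      = (p * cnj p + q * cnj q) * (p' * cnj p' + q' * cnj q')"
    by (simp add: algebra_simps)
  thus ?thesis using assms by simp
qed

lemma mat_1_eq_su2: "mat 1 = su2 1 0"
  by (simp add: su2_def mat2_def mat_def vec_eq_iff forall_2)

lemma su2_mult_adjoint: "p * cnj p + q * cnj q = 1 \<Longrightarrow> su2 p q ** su2 (cnj p) (- q) = mat 1"
  by (simp add: su2_mult mat_1_eq_su2 algebra_simps)

lemma su2_adjoint_mult: "p * cnj p + q * cnj q = 1 \<Longrightarrow> su2 (cnj p) (- q) ** su2 p q = mat 1"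
  by (simp add: su2_mult mat_1_eq_su2 algebra_simps)

lemma smult_mat_smult_mat: "smult_mat c (smult_mat d A) = smult_mat (c * d) A"
  by (simp add: smult_mat_def vec_eq_iff)

lemma smult_mat_1: "smult_mat 1 A = A"
  by (simp add: smult_mat_def vec_eq_iff)

lemma smult_mat_mult_smult_mat: "smult_mat c A ** smult_mat d B = smult_mat (c * d) (A ** B)"
  by (simp add: smult_mat_def matrix_matrix_mult_def vec_eq_iff sum_distrib_left algebra_simps)

lemma matrix_mult_smult_mat: "A ** smult_mat c B = smult_mat c (A ** B)"
  using smult_mat_mult_smult_mat[of 1 A c B] by (simp add: smult_mat_1)

lemma matrix_diff_ldistrib:
  fixes A :: "'a::ring_1 ^ 'n ^ 'm"
  shows "A ** (B - C) = A ** B - A ** C"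
  by (simp add: matrix_matrix_mult_def vec_eq_iff sum_subtractf algebra_simps)

lemma matrix_inv_unique:
  fixes A B :: "'a::semiring_1 ^ 'n ^ 'n"
  assumes AB: "A ** B = mat 1" and BA: "B ** A = mat 1"
  shows "matrix_inv A = B"
proof -
  have "A ** matrix_inv A = mat 1 \<and> matrix_inv A ** A = mat 1"
    unfolding matrix_inv_def using AB BA by (rule someI[of _ B, OF conjI])
  hence "matrix_inv A = (B ** A) ** matrix_inv A"
    by (simp add: BA matrix_mul_lid)
  also have "\<dots> = B" using \<open>A ** matrix_inv A = mat 1 \<and> _\<close>
    by (metis matrix_mul_assoc matrix_mul_rid)
  finally show ?thesis .
qed

definition phased_su2 :: "cmat2 \<Rightarrow> bool" where
  "phased_su2 A \<longleftrightarrow> (\<exists>k p q. A = smult_mat (zeta ^ k) (su2 p q) \<and> p * cnj p + q * cnj q = 1)"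

lemma phased_su2I: "p * cnj p + q * cnj q = 1 \<Longrightarrow> phased_su2 (smult_mat (zeta ^ k) (su2 p q))"
  unfolding phased_su2_def by blast

lemma phased_su2_mult:
  assumes "phased_su2 A" and "phased_su2 B"
  shows "phased_su2 (A ** B)"
proof -
  obtain k p q where A: "A = smult_mat (zeta ^ k) (su2 p q)" and pq: "p * cnj p + q * cnj q = 1"
    using assms(1) phased_su2_def by blast
  obtain k' p' q' where B: "B = smult_mat (zeta ^ k') (su2 p' q')"
    and pq': "p' * cnj p' + q' * cnj q' = 1"
    using assms(2) phased_su2_def by blast
  show ?thesis
    unfolding A B smult_mat_mult_smult_mat su2_mult power_add[symmetric]
    by (rule phased_su2I) (rule su2_unit_mult[OF pq pq'])
qed

lemma phased_su2_matrix_inv: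
  assumes "phased_su2 A"
  shows "phased_su2 (matrix_inv A)"
proof -
  obtain k p q where A: "A = smult_mat (zeta ^ k) (su2 p q)" and pq: "p * cnj p + q * cnj q = 1"
    using assms phased_su2_def by blast
  have "zeta ^ k * zeta ^ (15 * k) = (zeta ^ 16) ^ k"
    by (simp flip: power_add power_mult)
  hence inv: "zeta ^ k * zeta ^ (15 * k) = 1" by (simp add: zeta_power_16)
  have "matrix_inv A = smult_mat (zeta ^ (15 * k)) (su2 (cnj p) (- q))"
    unfolding A using pq inv
    by (intro matrix_inv_unique)
      (simp_all add: smult_mat_mult_smult_mat su2_mult_adjoint su2_adjoint_mult mult.commute,
       simp_all add: smult_mat_def mat_def vec_eq_iff)
  thus ?thesis using pq by (simp add: phased_su2I mult.commute)
qed

lemma phased_su2_gen_mat: "phased_su2 (gen_mat g)"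
proof -
  have cnj_zeta_power: "cnj (zeta ^ k) * zeta ^ k = 1" for k
    using zeta_power_mult_cnj[of k] by (simp add: mult.commute)
  have sqrt2: "complex_of_real (sqrt 2) * complex_of_real (sqrt 2) = 2"
    by (simp flip: of_real_mult)
  have \<omega>I: "smult_mat omega (mat 1) = smult_mat (zeta ^ 2) (su2 1 0)"
    by (simp add: zeta_power_2 mat_1_eq_su2)
  have H: "Hmat = smult_mat (zeta ^ 4) (su2 (- \<i> / sqrt 2) (- \<i> / sqrt 2))"
    by (simp add: Hmat_def su2_def smult_mat_def mat2_def vec_eq_iff forall_2 zeta_power_4 field_simps)
  have S: "Smat = smult_mat (zeta ^ 2) (su2 (cnj (zeta ^ 2)) 0)"
    using zeta_power_mult_cnj[of 2] zeta_power_4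
    by (simp add: Smat_def su2_def smult_mat_def mat2_def vec_eq_iff forall_2 flip: power_add)
  have T: "Tmat = smult_mat (zeta ^ 1) (su2 (cnj zeta) 0)"
    using zeta_power_mult_cnj[of 1]
    by (simp add: Tmat_def su2_def smult_mat_def mat2_def vec_eq_iff forall_2
        zeta_power_2 [symmetric] power2_eq_square)
  have gens: "phased_su2 (smult_mat omega (mat 1))" "phased_su2 Hmat"
    "phased_su2 Smat" "phased_su2 Tmat"
    using phased_su2I[of "cnj zeta" 0 1] cnj_zeta_power[of 1] cnj_zeta_power[of 2]
    by (auto simp: \<omega>I H S T field_simps sqrt2 intro!: phased_su2I)
  show ?thesis
    by (cases g) (simp_all add: gens phased_su2_matrix_inv)
qed

lemma phased_su2_word_mat: "phased_su2 (word_mat ws)"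
proof (induction ws)
  case Nil
  show ?case
    using phased_su2I[of 1 0 0] by (simp add: word_mat_def mat_1_eq_su2 smult_mat_1)
next
  case (Cons g ws)
  thus ?case by (simp add: word_mat_def phased_su2_mult phased_su2_gen_mat)
qed

lemma norm_vec2_power2: "norm (x :: complex ^ 2) ^ 2 = Re (x $ 1 * cnj (x $ 1) + x $ 2 * cnj (x $ 2))"
  by (simp add: norm_vec_def L2_set_def sum_2 complex_norm_square[symmetric])

lemma norm_su2_mult_vec:
  assumes "p * cnj p + q * cnj q = 1"
  shows "norm (su2 p q *v x) = norm x"
proof -
  have "norm (su2 p q *v x) ^ 2
      = Re ((p * cnj p + q * cnj q) * (x $ 1 * cnj (x $ 1) + x $ 2 * cnj (x $ 2)))"
    unfolding norm_vec2_power2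
    by (simp add: su2_def mat2_def matrix_vector_mult_def sum_2 algebra_simps)
  also have "\<dots> = norm x ^ 2" by (simp add: assms norm_vec2_power2)
  finally show ?thesis by (simp add: power2_eq_iff_nonneg)
qed

lemma op_norm_su2_mult:
  assumes "p * cnj p + q * cnj q = 1"
  shows "op_norm (su2 p q ** M) = op_norm M"
  unfolding op_norm_def onorm_def
  by (simp add: matrix_vector_mul_assoc[symmetric] norm_su2_mult_vec[OF assms])

lemma norm_id_minus_su2_axis:
  assumes "p * cnj p + q * cnj q = 1" and "mu * cnj mu = 1"
  shows "norm ((mat 1 - smult_mat mu (su2 p q)) *v axis 1 1) ^ 2 = 2 - 2 * Re (mu * p)"
    and "norm ((mat 1 - smult_mat mu (su2 p q)) *v axis 2 1) ^ 2 = 2 - 2 * Re (mu * cnj p)"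
proof -
  have "norm ((mat 1 - smult_mat mu (su2 p q)) *v axis 1 1) ^ 2
      = Re (1 + mu * cnj mu * (p * cnj p + q * cnj q) - (mu * p + cnj (mu * p)))"
    unfolding norm_vec2_power2
    by (simp add: su2_def mat2_def smult_mat_def mat_def matrix_vector_mult_def sum_2 axis_def algebra_simps)
  thus "norm ((mat 1 - smult_mat mu (su2 p q)) *v axis 1 1) ^ 2 = 2 - 2 * Re (mu * p)"
    using assms by simp
  have "norm ((mat 1 - smult_mat mu (su2 p q)) *v axis 2 1) ^ 2
      = Re (1 + mu * cnj mu * (p * cnj p + q * cnj q) - (mu * cnj p + cnj (mu * cnj p)))"
    unfolding norm_vec2_power2
    by (simp add: su2_def mat2_def smult_mat_def mat_def matrix_vector_mult_def sum_2 axis_def algebra_simps)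
  thus "norm ((mat 1 - smult_mat mu (su2 p q)) *v axis 2 1) ^ 2 = 2 - 2 * Re (mu * cnj p)"
    using assms by simp
qed

lemma norm_id_minus_sign_su2:
  assumes "p * cnj p + q * cnj q = 1" and "s \<in> {-1, 1 :: real}"
  shows "norm ((mat 1 - smult_mat (of_real s) (su2 p q)) *v x) ^ 2 = (2 - 2 * s * Re p) * norm x ^ 2"
proof -
  have "norm ((mat 1 - smult_mat (of_real s) (su2 p q)) *v x) ^ 2
      = Re ((1 + of_real (s * s) * (p * cnj p + q * cnj q) - of_real s * (p + cnj p))
            * (x $ 1 * cnj (x $ 1) + x $ 2 * cnj (x $ 2)))"
    unfolding norm_vec2_power2
    by (simp add: su2_def mat2_def smult_mat_def mat_def matrix_vector_mult_def sum_2 algebra_simps)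
  also have "\<dots> = (2 - 2 * s * Re p) * norm x ^ 2"
    using assms by (auto simp: norm_vec2_power2 complex_add_cnj)
  finally show ?thesis .
qed

lemma norm_axis_complex2: "norm (axis (i :: 2) (1 :: complex)) = 1"
proof -
  have "norm (axis i (1 :: complex)) ^ 2 = 1"
    using exhaust_2[of i] by (auto simp: norm_vec2_power2 axis_def)
  thus ?thesis by (simp add: power2_eq_1_iff)
qed

lemma op_norm_id_minus_real_sign:
  assumes pq: "p * cnj p + q * cnj q = 1" and mu: "mu * cnj mu = 1"
    and close: "op_norm (mat 1 - smult_mat mu (su2 p q)) \<le> eps"
  obtains s :: real where "s \<in> {-1, 1}" and "op_norm (mat 1 - smult_mat (of_real s) (su2 p q)) \<le> eps"
proof -
  let ?M = "mat 1 - smult_mat mu (su2 p q)"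
  have column: "norm (?M *v axis i 1) \<le> eps" for i
    using onorm[of "(*v) ?M" "axis i 1"] close by (simp add: op_norm_def norm_axis_complex2)
  have eps: "0 \<le> eps" using column[of 1] norm_ge_zero order_trans by blast
  have "2 - 2 * Re (mu * p) \<le> eps ^ 2"
    using power_mono[OF column[of 1] norm_ge_zero, of 2] norm_id_minus_su2_axis(1)[OF pq mu] by simp
  moreover have "2 - 2 * Re (mu * cnj p) \<le> eps ^ 2"
    using power_mono[OF column[of 2] norm_ge_zero, of 2] norm_id_minus_su2_axis(2)[OF pq mu] by simp
  moreover have "Re (mu * p) + Re (mu * cnj p) = 2 * Re mu * Re p" by simp
  moreover have "Re mu * Re p \<le> \<bar>Re p\<bar>"
  proof -
    have "complex_of_real (cmod mu ^ 2) = 1" using mu complex_norm_square[of mu] by simp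
    hence "cmod mu ^ 2 = 1" by (simp only: of_real_eq_1_iff)
    hence "cmod mu = 1" using norm_ge_zero[of mu] by (auto simp: power2_eq_1_iff)
    hence "\<bar>Re mu\<bar> \<le> 1" using abs_Re_le_cmod[of mu] by simp
    thus ?thesis by (metis abs_ge_self abs_mult mult_left_le_one_le abs_ge_zero order_trans)
  qed
  ultimately have avg: "2 - 2 * \<bar>Re p\<bar> \<le> eps ^ 2" by linarith
  define s :: real where "s = (if Re p \<ge> 0 then 1 else -1)"
  have s: "s \<in> {-1, 1}" and "s * Re p = \<bar>Re p\<bar>" by (auto simp: s_def)
  have "norm ((mat 1 - smult_mat (of_real s) (su2 p q)) *v x) \<le> eps * norm x" for x
  proof (rule power2_le_imp_le)
    have "norm ((mat 1 - smult_mat (of_real s) (su2 p q)) *v x) ^ 2 = (2 - 2 * \<bar>Re p\<bar>) * norm x ^ 2"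
      using norm_id_minus_sign_su2[OF pq s] \<open>s * Re p = _\<close> by (simp add: mult.assoc)
    also have "\<dots> \<le> (eps * norm x) ^ 2"
      unfolding power_mult_distrib using avg by (simp add: mult_right_mono)
    finally show "norm ((mat 1 - smult_mat (of_real s) (su2 p q)) *v x) ^ 2 \<le> (eps * norm x) ^ 2" .
  qed (use eps in simp)
  hence "op_norm (mat 1 - smult_mat (of_real s) (su2 p q)) \<le> eps"
    unfolding op_norm_def by (rule onorm_le)
  with s that show ?thesis by blast
qed

lemma op_norm_su2_minus_real_sign:
  assumes ab: "a * cnj a + b * cnj b = 1" and pq: "p * cnj p + q * cnj q = 1"
    and mu: "mu * cnj mu = 1"
    and close: "op_norm (su2 a b - smult_mat mu (su2 p q)) \<le> eps"
  obtains s :: real where "s \<in> {-1, 1}" and "op_norm (su2 a b - smult_mat (of_real s) (su2 p q)) \<le> eps"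
proof -
  define p' where "p' = cnj a * p + cnj b * q"
  define q' where "q' = a * q - b * p"
  have W: "su2 (cnj a) (- b) ** su2 p q = su2 p' q'"
    by (simp add: su2_mult p'_def q'_def algebra_simps)
  have pq': "p' * cnj p' + q' * cnj q' = 1"
    using su2_unit_mult[of "cnj a" "- b" p q] ab pq by (simp add: p'_def q'_def algebra_simps)
  have "su2 a b - smult_mat c (su2 p q) = su2 a b ** (mat 1 - smult_mat c (su2 p' q'))" for c
    by (simp add: matrix_diff_ldistrib matrix_mult_smult_mat matrix_mul_assoc su2_mult_adjoint[OF ab]
        flip: W)
  hence reduce: "op_norm (su2 a b - smult_mat c (su2 p q)) = op_norm (mat 1 - smult_mat c (su2 p' q'))" for c
    by (simp add: op_norm_su2_mult[OF ab])
  obtain s :: real where "s \<in> {-1, 1}" "op_norm (mat 1 - smult_mat (of_real s) (su2 p' q')) \<le> eps"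
    using op_norm_id_minus_real_sign[OF pq' mu] close reduce by metis
  with that reduce show ?thesis by metis
qed

lemma word_mat_replicate_GW: "word_mat (replicate m GW @ ws) = smult_mat (omega ^ m) (word_mat ws)"
proof (induction m)
  case 0
  show ?case by (simp add: smult_mat_1)
next
  case (Suc m)
  have "smult_mat omega (mat 1) ** smult_mat (omega ^ m) (word_mat ws)
      = smult_mat (omega ^ Suc m) (word_mat ws)"
    by (simp add: smult_mat_mult_smult_mat)
  thus ?case using Suc by (simp add: word_mat_def)
qed

lemma tcount_word_replicate_GW: "tcount_word (replicate m GW @ ws) = tcount_word ws"
  by (simp add: tcount_word_def)

lemma smult_omega_power_word_iff:
  "(\<exists>ws. word_mat ws = smult_mat (omega ^ m) U \<and> tcount_word ws = n)
     \<longleftrightarrow> (\<exists>ws. word_mat ws = U \<and> tcount_word ws = n)"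
proof
  assume "\<exists>ws. word_mat ws = smult_mat (omega ^ m) U \<and> tcount_word ws = n"
  then obtain ws where ws: "word_mat ws = smult_mat (omega ^ m) U" "tcount_word ws = n" by blast
  have "omega ^ (7 * m) * omega ^ m = (omega ^ 8) ^ m"
    by (simp flip: power_add power_mult)
  hence "word_mat (replicate (7 * m) GW @ ws) = U"
    by (simp add: word_mat_replicate_GW ws smult_mat_smult_mat omega_power_8 smult_mat_1)
  thus "\<exists>ws. word_mat ws = U \<and> tcount_word ws = n"
    using ws tcount_word_replicate_GW by blast
next
  assume "\<exists>ws. word_mat ws = U \<and> tcount_word ws = n"
  then obtain ws where "word_mat ws = U" "tcount_word ws = n" by blast
  thus "\<exists>ws. word_mat ws = smult_mat (omega ^ m) U \<and> tcount_word ws = n"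
    using word_mat_replicate_GW tcount_word_replicate_GW by metis
qed

lemma clifford_T_smult_omega_power: "clifford_T U \<Longrightarrow> clifford_T (smult_mat (omega ^ m) U)"
  using smult_omega_power_word_iff[of m U] by (auto simp: clifford_T_def)

lemma tcount_smult_omega_power: "tcount (smult_mat (omega ^ m) U) = tcount U"
  unfolding tcount_def smult_omega_power_word_iff ..

theorem corollary7p20:
  fixes theta eps :: real and U :: cmat2 and lam :: complex
  assumes "eps > 0"
    and "clifford_T U"
    and "cmod lam = 1"
    and "op_norm (Rz theta - smult_mat lam U) \<le> eps"
  shows "\<exists>lam' U'. lam' \<in> {1, exp (\<i> * of_real pi / 8)} \<and> clifford_T U' \<and>
           tcount U' = tcount U \<and> op_norm (Rz theta - smult_mat lam' U') \<le> eps"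
proof -
  obtain k p q where U: "U = smult_mat (zeta ^ k) (su2 p q)" and pq: "p * cnj p + q * cnj q = 1"
    using assms(2) phased_su2_word_mat unfolding clifford_T_def phased_su2_def by blast
  define e where "e = exp (- \<i> * of_real theta / 2)"
  have Rz: "Rz theta = su2 e 0" and e: "e * cnj e + 0 * cnj 0 = 1"
    unfolding Rz_def su2_def e_def by (simp_all add: exp_cnj flip: exp_add)
  have "lam * zeta ^ k * cnj (lam * zeta ^ k) = 1"
    using assms(3) zeta_power_mult_cnj[of k] by (simp add: complex_norm_square[symmetric] algebra_simps)
  moreover have "op_norm (su2 e 0 - smult_mat (lam * zeta ^ k) (su2 p q)) \<le> eps"
    using assms(4) by (simp add: Rz U smult_mat_smult_mat)
  ultimately obtain s :: real where "s \<in> {-1, 1}"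
    and s: "op_norm (su2 e 0 - smult_mat (of_real s) (su2 p q)) \<le> eps"
    using op_norm_su2_minus_real_sign[OF e pq] by blast
  then obtain i where "complex_of_real s = zeta ^ (i + k)" using real_sign_eq_zeta_power by metis
  hence "smult_mat (of_real s) (su2 p q) = smult_mat (zeta ^ (i mod 2)) (smult_mat (omega ^ (i div 2)) U)"
    by (simp add: U smult_mat_smult_mat power_add zeta_power_split[of i] mult.assoc)
  thus ?thesis
    using s zeta_power_mod_2 assms(2) by (metis Rz clifford_T_smult_omega_power tcount_smult_omega_power)
qed

end
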